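(* Let $S$ be an entropy function for a finite set $X$, and let $A_1\subset\cdots\subset A_m$ and $B_1\subset\cdots\subset B_n$ be subsets of $X$ with $A_m\cap B_n=\emptyset$. Then there exists an EDF $f$ for $S$ such that: $\sum_{x\in A_i}f(x)=S(A_i)$ for all $i=1,\dots,m$; $\sum_{y\in B_j}f(y)=-S(B_j)$ for all $j=1,\dots,n$; $f(x)\ge0$ for all $x\in A_1$; and $f(y)\le 0$ for all $y\in B_1$.
   Context: An entropy function for a finite set $X$ is a function $S:2^X\to[0,\infty)$ with $S(\emptyset)=0$, $S(A)+S(B)\ge S(A\cap B)+S(A\cup B)$ and $S(A)+S(B)\ge S(A\setminus B)+S(B\setminus A)$ for all $A,B\subseteq X$. An entanglement distribution function (EDF) for $S$ is a function $f:X\to\mathbb R$ with $\big|\sum_{x\in A}f(x)\big|\le S(A)$ for all $A\subseteq X$. *)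

theory Defs
  imports "HOL-Analysis.Analysis"
begin

definition entropy_function :: "'a set \<Rightarrow> ('a set \<Rightarrow> real) \<Rightarrow> bool" where
  "entropy_function X S \<longleftrightarrow> finite X \<and>
     (\<forall>A. A \<subseteq> X \<longrightarrow> S A \<ge> 0) \<and> S {} = 0 \<and>
     (\<forall>A B. A \<subseteq> X \<longrightarrow> B \<subseteq> X \<longrightarrow> S A + S B \<ge> S (A \<inter> B) + S (A \<union> B)) \<and>
     (\<forall>A B. A \<subseteq> X \<longrightarrow> B \<subseteq> X \<longrightarrow> S A + S B \<ge> S (A - B) + S (B - A))"

definition is_EDF :: "'a set \<Rightarrow> ('a set \<Rightarrow> real) \<Rightarrow> ('a \<Rightarrow> real) \<Rightarrow> bool" where
  "is_EDF X S f \<longleftrightarrow> (\<forall>A. A \<subseteq> X \<longrightarrow> \<bar>\<Sum>x\<in>A. f x\<bar> \<le> S A)"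

end

theory Submission
  imports Defs
begin

text \<open>
  The values on \<open>X - B n\<close> and on \<open>B n\<close> are constructed separately and glued.
  On \<open>X - B n\<close> replace \<open>S\<close> by \<open>R D = min {S (D \<union> E) | E \<subseteq> A 1}\<close>: it is
  still submodular, agrees with \<open>S\<close> on supersets of \<open>A 1\<close>, and
  \<open>R (A 1 - {x}) \<le> S (A 1)\<close>. Edmonds' greedy construction gives a point of the base
  polytope of \<open>R\<close> that is tight on the chain \<open>A i\<close>; tightness at \<open>A 1\<close> then forces
  nonnegative values on \<open>A 1\<close>. The same on \<open>B n\<close> with the chain \<open>B j\<close>, negated,
  gives the values on \<open>B n\<close>. For \<open>D \<subseteq> X\<close> the sum of the glued function is bounded
  by \<open>S D\<close> in absolute value by weak monotonicity
  \<open>S (D - B n) + S (B n - D) \<le> S D + S (B n)\<close> and its counterpart for \<open>X - B n\<close>.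
\<close>

definition submodular_on :: "'a set \<Rightarrow> ('a set \<Rightarrow> real) \<Rightarrow> bool" where
  "submodular_on W R \<longleftrightarrow>
     (\<forall>U V. U \<subseteq> W \<longrightarrow> V \<subseteq> W \<longrightarrow> R (U \<inter> V) + R (U \<union> V) \<le> R U + R V)"

definition in_base_polytope :: "'a set \<Rightarrow> ('a set \<Rightarrow> real) \<Rightarrow> ('a \<Rightarrow> real) \<Rightarrow> bool" where
  "in_base_polytope W R f \<longleftrightarrow> (\<forall>D. D \<subseteq> W \<longrightarrow> sum f D \<le> R D) \<and> sum f W = R W"

lemma submodular_onD:
  "submodular_on W R \<Longrightarrow> U \<subseteq> W \<Longrightarrow> V \<subseteq> W \<Longrightarrow> R (U \<inter> V) + R (U \<union> V) \<le> R U + R V"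
  unfolding submodular_on_def by blast

lemma in_base_polytope_le: "in_base_polytope W R f \<Longrightarrow> D \<subseteq> W \<Longrightarrow> sum f D \<le> R D"
  unfolding in_base_polytope_def by blast

lemma submodular_on_subset: "submodular_on W R \<Longrightarrow> V \<subseteq> W \<Longrightarrow> submodular_on V R"
  unfolding submodular_on_def by blast

lemma entropy_functionD:
  assumes "entropy_function X S"
  shows "finite X" and "S {} = 0" and "\<And>D. D \<subseteq> X \<Longrightarrow> 0 \<le> S D"
    and "submodular_on X S"
    and "\<And>U V. U \<subseteq> X \<Longrightarrow> V \<subseteq> X \<Longrightarrow> S (U - V) + S (V - U) \<le> S U + S V"
  using assms unfolding entropy_function_def submodular_on_def by (simp_all add: add.commute)

lemma in_base_polytope_sum_ge:
  assumes "in_base_polytope W R f" "finite W" "D \<subseteq> W"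
  shows "R W - R (W - D) \<le> sum f D"
proof -
  have "sum f W = sum f (W - D) + sum f D"
    using sum.subset_diff[OF assms(3,2)] .
  moreover have "sum f (W - D) \<le> R (W - D)" "sum f W = R W"
    using assms(1) unfolding in_base_polytope_def by auto
  ultimately show ?thesis by linarith
qed

lemma in_base_polytope_insert:
  assumes "finite W" "submodular_on W R" "x \<in> W" "in_base_polytope (W - {x}) R f"
  shows "in_base_polytope W R (f(x := R W - R (W - {x})))"
    (is "in_base_polytope W R ?f")
proof -
  have off_x: "sum ?f D = sum f D" if "x \<notin> D" for D
    using that by (intro sum.cong) auto
  have at_x: "sum ?f D = R W - R (W - {x}) + sum f (D - {x})" if "x \<in> D" "D \<subseteq> W" for D
  proof -
    have "finite D" using that(2) assms(1) finite_subset by blast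
    then have "sum ?f D = ?f x + sum ?f (D - {x})" using that(1) by (rule sum.remove)
    then show ?thesis using off_x[of "D - {x}"] by simp
  qed
  have "sum ?f D \<le> R D" if "D \<subseteq> W" for D
  proof (cases "x \<in> D")
    case True
    have "R (D \<inter> (W - {x})) + R (D \<union> (W - {x})) \<le> R D + R (W - {x})"
      using assms(2) that by (rule submodular_onD) blast
    moreover have "D \<inter> (W - {x}) = D - {x}" "D \<union> (W - {x}) = W"
      using that True assms(3) by blast+
    ultimately have "R (D - {x}) + R W \<le> R D + R (W - {x})" by simp
    moreover have "sum f (D - {x}) \<le> R (D - {x})"
      using assms(4) by (rule in_base_polytope_le) (use that in blast)
    ultimately show ?thesis using at_x[OF True that] by linarith
  next
    case False
    then have "D \<subseteq> W - {x}" using that by blast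
    then show ?thesis using off_x[OF False] in_base_polytope_le[OF assms(4)] by simp
  qed
  moreover have "sum ?f W = R W"
    using at_x[OF assms(3) order_refl] assms(4) unfolding in_base_polytope_def by simp
  ultimately show ?thesis unfolding in_base_polytope_def by blast
qed

text \<open>Edmonds' greedy construction; the induction removes a point outside the largest
  proper member of the chain.\<close>

lemma in_base_polytope_tight_on_chain:
  assumes "finite W" "submodular_on W R" "R {} = 0" "K \<subseteq> Pow W" "chain\<^sub>\<subseteq> K"
  shows "\<exists>f. in_base_polytope W R f \<and> (\<forall>C\<in>K. sum f C = R C)"
  using assms(1,2,4,5)
proof (induction W arbitrary: K rule: finite_psubset_induct)
  case (psubset W)
  show ?case
  proof (cases "W = {}")
    case True
    then have "K \<subseteq> {{}}" using psubset.prems(2) by auto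
    then show ?thesis using True assms(3) unfolding in_base_polytope_def
      by (auto intro!: exI[of _ "\<lambda>_. 0"])
  next
    case False
    define P where "P = K - {W}"
    have P_chain: "chain\<^sub>\<subseteq> P" using psubset.prems(3) unfolding P_def chain_subset_def by blast
    have P_proper: "C \<subset> W" if "C \<in> P" for C using that psubset.prems(2) unfolding P_def by blast
    have "\<Union>P \<subset> W"
    proof (cases "P = {}")
      case True
      then show ?thesis using False by auto
    next
      case P_nonempty: False
      have "P \<subseteq> Pow W" using psubset.prems(2) unfolding P_def by blast
      then have "finite P" using psubset.hyps(1) by (simp add: finite_subset)
      then have "\<Union>P \<in> P"
        using Union_in_chain P_nonempty P_chain unfolding chain_subset_alt_def by blast
      then show ?thesis using P_proper by blast
    qed
    then obtain x where x: "x \<in> W" "x \<notin> \<Union>P" by blast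
    have "W - {x} \<subset> W" using x(1) by blast
    moreover have "submodular_on (W - {x}) R" using psubset.prems(1) submodular_on_subset by blast
    moreover have "P \<subseteq> Pow (W - {x})" using x(2) P_proper by blast
    ultimately obtain f where f: "in_base_polytope (W - {x}) R f" "\<forall>C\<in>P. sum f C = R C"
      using psubset.IH[OF _ _ _ P_chain] by blast
    define f' where "f' = f(x := R W - R (W - {x}))"
    have base: "in_base_polytope W R f'"
      unfolding f'_def using psubset.hyps(1) psubset.prems(1) x(1) f(1) by (rule in_base_polytope_insert)
    have "sum f' C = R C" if "C \<in> K" for C
    proof (cases "C = W")
      case True
      then show ?thesis using base unfolding in_base_polytope_def by simp
    next
      case False
      then have "C \<in> P" "x \<notin> C" using that x(2) unfolding P_def by auto
      then have "sum f' C = sum f C" unfolding f'_def by (intro sum.cong) auto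
      then show ?thesis using f(2) \<open>C \<in> P\<close> by simp
    qed
    then show ?thesis using base by blast
  qed
qed

definition min_extension :: "('a set \<Rightarrow> real) \<Rightarrow> 'a set \<Rightarrow> 'a set \<Rightarrow> real" where
  "min_extension S F D = Min ((\<lambda>E. S (D \<union> E)) ` Pow F)"

lemma min_extension_le: "finite F \<Longrightarrow> E \<subseteq> F \<Longrightarrow> min_extension S F D \<le> S (D \<union> E)"
  unfolding min_extension_def by (intro Min_le) auto

lemma min_extension_le_self: "finite F \<Longrightarrow> min_extension S F D \<le> S D"
  using min_extension_le[of F "{}"] by simp

lemma min_extension_attained:
  assumes "finite F"
  obtains E where "E \<subseteq> F" "min_extension S F D = S (D \<union> E)"
proof -
  have "min_extension S F D \<in> (\<lambda>E. S (D \<union> E)) ` Pow F"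
    unfolding min_extension_def using assms by (intro Min_in) auto
  then show ?thesis using that by auto
qed

lemma min_extension_eq:
  assumes "finite F" "F \<subseteq> D"
  shows "min_extension S F D = S D"
proof -
  obtain E where "E \<subseteq> F" "min_extension S F D = S (D \<union> E)"
    using min_extension_attained[OF assms(1)] .
  moreover have "D \<union> E = D" using \<open>E \<subseteq> F\<close> assms(2) by blast
  ultimately show ?thesis by simp
qed

lemma min_extension_empty:
  assumes "finite F" "S {} = 0" "\<forall>E. E \<subseteq> F \<longrightarrow> 0 \<le> S E"
  shows "min_extension S F {} = 0"
proof -
  obtain E where "E \<subseteq> F" "min_extension S F {} = S ({} \<union> E)"
    using min_extension_attained[OF assms(1)] .
  moreover have "0 \<le> S E" using assms(3) \<open>E \<subseteq> F\<close> by blast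
  ultimately show ?thesis using min_extension_le_self[OF assms(1), of S "{}"] assms(2) by simp
qed

lemma submodular_on_min_extension:
  assumes "finite F" "F \<subseteq> X" "submodular_on X S"
  shows "submodular_on X (min_extension S F)"
  unfolding submodular_on_def
proof (intro allI impI)
  fix U V assume UV: "U \<subseteq> X" "V \<subseteq> X"
  obtain E1 where E1: "E1 \<subseteq> F" "min_extension S F U = S (U \<union> E1)"
    using min_extension_attained[OF assms(1)] .
  obtain E2 where E2: "E2 \<subseteq> F" "min_extension S F V = S (V \<union> E2)"
    using min_extension_attained[OF assms(1)] .
  have "U \<union> E1 \<subseteq> X" "V \<union> E2 \<subseteq> X" using UV E1(1) E2(1) assms(2) by blast+
  with assms(3) have "S ((U \<union> E1) \<inter> (V \<union> E2)) + S ((U \<union> E1) \<union> (V \<union> E2))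
      \<le> S (U \<union> E1) + S (V \<union> E2)"
    by (rule submodular_onD)
  moreover have "min_extension S F (U \<inter> V) \<le> S ((U \<union> E1) \<inter> (V \<union> E2))"
  proof -
    have "min_extension S F (U \<inter> V) \<le> S ((U \<inter> V) \<union> ((U \<union> E1) \<inter> (V \<union> E2) - U \<inter> V))"
      using E1(1) E2(1) by (intro min_extension_le[OF assms(1)]) blast
    moreover have "(U \<inter> V) \<union> ((U \<union> E1) \<inter> (V \<union> E2) - U \<inter> V) = (U \<union> E1) \<inter> (V \<union> E2)"
      by blast
    ultimately show ?thesis by simp
  qed
  moreover have "min_extension S F (U \<union> V) \<le> S ((U \<union> E1) \<union> (V \<union> E2))"
  proof -
    have "min_extension S F (U \<union> V) \<le> S ((U \<union> V) \<union> (E1 \<union> E2))"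
      using E1(1) E2(1) by (intro min_extension_le[OF assms(1)]) blast
    moreover have "(U \<union> V) \<union> (E1 \<union> E2) = (U \<union> E1) \<union> (V \<union> E2)" by blast
    ultimately show ?thesis by simp
  qed
  ultimately show "min_extension S F (U \<inter> V) + min_extension S F (U \<union> V)
      \<le> min_extension S F U + min_extension S F V"
    using E1(2) E2(2) by linarith
qed

lemma in_base_polytope_tight_on_chain_nonneg:
  assumes "finite W" "submodular_on W S" "S {} = 0" "\<forall>E. E \<subseteq> F \<longrightarrow> 0 \<le> S E"
    and "K \<subseteq> Pow W" "chain\<^sub>\<subseteq> K" "F \<in> K" "\<forall>C\<in>K. F \<subseteq> C"
  shows "\<exists>f. in_base_polytope W S f \<and> (\<forall>C\<in>K. sum f C = S C) \<and> (\<forall>x\<in>F. 0 \<le> f x)"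
proof -
  let ?R = "min_extension S F"
  have FW: "F \<subseteq> W" using assms(5,7) by blast
  then have fin_F: "finite F" using assms(1) by (rule finite_subset)
  have "submodular_on W ?R" using fin_F FW assms(2) by (rule submodular_on_min_extension)
  moreover have "?R {} = 0" using fin_F assms(3,4) by (rule min_extension_empty)
  ultimately obtain f where f: "in_base_polytope W ?R f" "\<forall>C\<in>K. sum f C = ?R C"
    using in_base_polytope_tight_on_chain[OF assms(1) _ _ assms(5,6)] by blast
  have "in_base_polytope W S f"
    unfolding in_base_polytope_def
  proof (intro conjI allI impI)
    show "sum f D \<le> S D" if "D \<subseteq> W" for D
      using in_base_polytope_le[OF f(1) that] min_extension_le_self[OF fin_F, of S D] by linarith
    show "sum f W = S W"
      using f(1) min_extension_eq[OF fin_F FW] unfolding in_base_polytope_def by simp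
  qed
  moreover have tight: "\<forall>C\<in>K. sum f C = S C" using f(2) assms(8) min_extension_eq[OF fin_F] by simp
  moreover have "0 \<le> f x" if "x \<in> F" for x
  proof -
    have "sum f F = f x + sum f (F - {x})" using fin_F that by (rule sum.remove)
    moreover have "sum f (F - {x}) \<le> ?R (F - {x})"
      using f(1) by (rule in_base_polytope_le) (use FW in blast)
    moreover have "?R (F - {x}) \<le> S ((F - {x}) \<union> {x})"
      using that by (intro min_extension_le[OF fin_F]) blast
    moreover have "(F - {x}) \<union> {x} = F" using that by blast
    moreover have "sum f F = S F" using tight assms(7) by blast
    ultimately show ?thesis by simp
  qed
  ultimately show ?thesis by blast
qed

lemma is_EDF_glue:
  assumes "entropy_function X S" "B \<subseteq> X"
    and g: "in_base_polytope (X - B) S g" and h: "in_base_polytope B S h"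
  shows "is_EDF X S (\<lambda>x. if x \<in> B then - h x else g x)"
  unfolding is_EDF_def
proof (intro allI impI)
  fix D assume D: "D \<subseteq> X"
  note weak_mono = entropy_functionD(5)[OF assms(1)]
  have fin_X: "finite X" by (rule entropy_functionD(1)[OF assms(1)])
  then have fin_D: "finite D" and fin_B: "finite B" and fin_W: "finite (X - B)"
    using D assms(2) by (auto intro: finite_subset)
  have "(\<Sum>x\<in>D. if x \<in> B then - h x else g x) = sum g (D - B) - sum h (D \<inter> B)"
    using fin_D by (simp add: sum.If_cases sum_negf Diff_eq)
  moreover have "sum g (D - B) \<le> S (D - B)" using g by (rule in_base_polytope_le) (use D in blast)
  moreover have "sum h (D \<inter> B) \<le> S (D \<inter> B)" using h by (rule in_base_polytope_le) blast
  moreover have "S B - S (B - (D \<inter> B)) \<le> sum h (D \<inter> B)"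
    using h fin_B by (rule in_base_polytope_sum_ge) blast
  moreover have "S (X - B) - S ((X - B) - (D - B)) \<le> sum g (D - B)"
    using g fin_W by (rule in_base_polytope_sum_ge) (use D in blast)
  moreover have "S (D - B) + S (B - (D \<inter> B)) \<le> S D + S B"
  proof -
    have "B - D = B - (D \<inter> B)" by blast
    then show ?thesis using weak_mono[OF D assms(2)] by simp
  qed
  moreover have "S (D \<inter> B) + S ((X - B) - (D - B)) \<le> S D + S (X - B)"
  proof -
    have "D - (X - B) = D \<inter> B" "(X - B) - D = (X - B) - (D - B)" using D by blast+
    then show ?thesis using weak_mono[OF D, of "X - B"] by simp
  qed
  ultimately show "\<bar>\<Sum>x\<in>D. if x \<in> B then - h x else g x\<bar> \<le> S D" by linarith
qed

lemma strict_chain_mono: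
  assumes "\<forall>i. 1 \<le> i \<and> i < m \<longrightarrow> A i \<subset> A (Suc i)" "1 \<le> i" "i \<le> j" "j \<le> m"
  shows "A i \<subseteq> A j"
  using assms(3,4)
proof (induction j rule: dec_induct)
  case (step k)
  then have "A i \<subseteq> A k" "A k \<subset> A (Suc k)" using assms(1,2) by simp_all
  then show ?case by blast
qed simp

lemma chain_subset_strict_chain:
  assumes "\<forall>i. 1 \<le> i \<and> i < m \<longrightarrow> A i \<subset> A (Suc i)"
  shows "chain\<^sub>\<subseteq> (A ` {1..m})"
  unfolding chain_subset_def
proof (intro ballI)
  fix C D assume "C \<in> A ` {1..m}" "D \<in> A ` {1..m}"
  then obtain i j where "i \<in> {1..m}" "j \<in> {1..m}" "C = A i" "D = A j" by blast
  then show "C \<subseteq> D \<or> D \<subseteq> C"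
    using strict_chain_mono[OF assms] nat_le_linear[of i j] by auto
qed

lemma strict_chain_in_base_polytope:
  assumes "entropy_function X S" "W \<subseteq> X" "m \<ge> 1"
    and "\<forall>i\<in>{1..m}. A i \<subseteq> W" "\<forall>i. 1 \<le> i \<and> i < m \<longrightarrow> A i \<subset> A (Suc i)"
  shows "\<exists>g. in_base_polytope W S g \<and> (\<forall>i\<in>{1..m}. sum g (A i) = S (A i)) \<and>
    (\<forall>x\<in>A 1. 0 \<le> g x)"
proof -
  have one_in: "1 \<in> {1..m}" using assms(3) by simp
  have "\<exists>g. in_base_polytope W S g \<and> (\<forall>C\<in>A ` {1..m}. sum g C = S C) \<and>
      (\<forall>x\<in>A 1. 0 \<le> g x)"
  proof (rule in_base_polytope_tight_on_chain_nonneg)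
    show "finite W" using entropy_functionD(1)[OF assms(1)] assms(2) by (rule finite_subset[rotated])
    show "submodular_on W S" using entropy_functionD(4)[OF assms(1)] assms(2)
      by (rule submodular_on_subset)
    show "S {} = 0" using assms(1) by (rule entropy_functionD(2))
    show "\<forall>E. E \<subseteq> A 1 \<longrightarrow> 0 \<le> S E"
      using entropy_functionD(3)[OF assms(1)] assms(2,4) one_in by blast
    show "A ` {1..m} \<subseteq> Pow W" using assms(4) by blast
    show "chain\<^sub>\<subseteq> (A ` {1..m})" using assms(5) by (rule chain_subset_strict_chain)
    show "A 1 \<in> A ` {1..m}" using one_in by blast
    show "\<forall>C\<in>A ` {1..m}. A 1 \<subseteq> C" using strict_chain_mono[OF assms(5)] by auto
  qed
  then show ?thesis by auto
qed

theorem theorem19: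
  fixes X :: "'a set" and S :: "'a set \<Rightarrow> real"
    and A B :: "nat \<Rightarrow> 'a set" and m n :: nat
  assumes "entropy_function X S"
    and "m \<ge> 1" and "n \<ge> 1"
    and "\<forall>i\<in>{1..m}. A i \<subseteq> X" and "\<forall>j\<in>{1..n}. B j \<subseteq> X"
    and "\<forall>i. 1 \<le> i \<and> i < m \<longrightarrow> A i \<subset> A (Suc i)"
    and "\<forall>j. 1 \<le> j \<and> j < n \<longrightarrow> B j \<subset> B (Suc j)"
    and "A m \<inter> B n = {}"
  shows "\<exists>f :: 'a \<Rightarrow> real. is_EDF X S f \<and>
           (\<forall>i\<in>{1..m}. (\<Sum>x\<in>A i. f x) = S (A i)) \<and>
           (\<forall>j\<in>{1..n}. (\<Sum>y\<in>B j. f y) = - S (B j)) \<and>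
           (\<forall>x\<in>A 1. f x \<ge> 0) \<and>
           (\<forall>y\<in>B 1. f y \<le> 0)"
proof -
  have Bn_X: "B n \<subseteq> X" using assms(3,5) by auto
  have B_Bn: "\<forall>j\<in>{1..n}. B j \<subseteq> B n" using strict_chain_mono[OF assms(7)] by auto
  have "\<forall>i\<in>{1..m}. A i \<subseteq> A m" using strict_chain_mono[OF assms(6)] by auto
  then have A_W: "\<forall>i\<in>{1..m}. A i \<subseteq> X - B n" using assms(4,8) by blast
  obtain g where g: "in_base_polytope (X - B n) S g" "\<forall>i\<in>{1..m}. sum g (A i) = S (A i)"
      "\<forall>x\<in>A 1. 0 \<le> g x"
    using strict_chain_in_base_polytope[OF assms(1) Diff_subset assms(2) A_W assms(6)] by blast
  obtain h where h: "in_base_polytope (B n) S h" "\<forall>j\<in>{1..n}. sum h (B j) = S (B j)"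
      "\<forall>y\<in>B 1. 0 \<le> h y"
    using strict_chain_in_base_polytope[OF assms(1) Bn_X assms(3) B_Bn assms(7)] by blast
  define f where "f x = (if x \<in> B n then - h x else g x)" for x
  have "is_EDF X S f" unfolding f_def using assms(1) Bn_X g(1) h(1) by (rule is_EDF_glue)
  moreover have "sum f (A i) = S (A i)" if "i \<in> {1..m}" for i
  proof -
    have "sum f (A i) = sum g (A i)" using A_W that unfolding f_def by (intro sum.cong) auto
    then show ?thesis using g(2) that by simp
  qed
  moreover have "sum f (B j) = - S (B j)" if "j \<in> {1..n}" for j
  proof -
    have "sum f (B j) = - sum h (B j)"
      using B_Bn that unfolding f_def sum_negf[symmetric] by (intro sum.cong) auto
    then show ?thesis using h(2) that by simp
  qed
  moreover have "\<forall>x\<in>A 1. f x \<ge> 0" using g(3) A_W assms(2) unfolding f_def by auto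
  moreover have "\<forall>y\<in>B 1. f y \<le> 0" using h(3) B_Bn assms(3) unfolding f_def by auto
  ultimately show ?thesis by blast
qed

end
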